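(* Let $R=\mathbb{F}_q+v\mathbb{F}_q+v^2\mathbb{F}_q$ with $v^3=v$, $q$ a prime power. There exists a self-dual cyclic code of length $n$ over $R$ if and only if $q$ is a power of $2$ and $n$ is even.
   Context: $R=\mathbb{F}_q[v]/\langle v^3-v\rangle$. A linear code of length $n$ over $R$ is an $R$-submodule of $R^n$; it is cyclic if $(c_{n-1},c_0,\dots,c_{n-2})\in C$ whenever $(c_0,\dots,c_{n-1})\in C$, and self-dual if $C=C^\perp$, where $C^\perp=\{x\in R^n:\sum_i x_iy_i=0\ \forall y\in C\}$. *)

theory Defs
  imports "HOL-Computational_Algebra.Polynomial"
begin

text \<open>The ring R = F_q[v]/(v^3 - v), with F_q a finite field (type 'a).\<close>

definition vpoly :: "'a::comm_ring_1 poly" where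
  "vpoly = [:0, -1, 0, 1:]"

definition Rset :: "'a::field poly set" where
  "Rset = {p. degree p < 3}"

definition rmul :: "'a::field poly \<Rightarrow> 'a poly \<Rightarrow> 'a poly" where
  "rmul p q = (p * q) mod vpoly"

definition words :: "nat \<Rightarrow> (nat \<Rightarrow> 'a::field poly) set" where
  "words n = {x. (\<forall>i<n. x i \<in> Rset) \<and> (\<forall>i\<ge>n. x i = 0)}"

definition linear_code :: "nat \<Rightarrow> (nat \<Rightarrow> 'a::field poly) set \<Rightarrow> bool" where
  "linear_code n C \<longleftrightarrow> C \<subseteq> words n \<and> (\<lambda>i. 0) \<in> C
     \<and> (\<forall>x\<in>C. \<forall>y\<in>C. (\<lambda>i. x i + y i) \<in> C)
     \<and> (\<forall>r\<in>Rset. \<forall>x\<in>C. (\<lambda>i. rmul r (x i)) \<in> C)"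

definition cyc_shift :: "nat \<Rightarrow> (nat \<Rightarrow> 'a::zero) \<Rightarrow> (nat \<Rightarrow> 'a)" where
  "cyc_shift n x = (\<lambda>i. if i < n then x ((i + n - 1) mod n) else 0)"

definition cyclic_code :: "nat \<Rightarrow> (nat \<Rightarrow> 'a::field poly) set \<Rightarrow> bool" where
  "cyclic_code n C \<longleftrightarrow> (\<forall>x\<in>C. cyc_shift n x \<in> C)"

definition inner :: "nat \<Rightarrow> (nat \<Rightarrow> 'a::field poly) \<Rightarrow> (nat \<Rightarrow> 'a poly) \<Rightarrow> 'a poly" where
  "inner n x y = (\<Sum>i<n. x i * y i) mod vpoly"

definition dual_code :: "nat \<Rightarrow> (nat \<Rightarrow> 'a::field poly) set \<Rightarrow> (nat \<Rightarrow> 'a poly) set" where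
  "dual_code n C = {x \<in> words n. \<forall>y\<in>C. inner n x y = 0}"

definition self_dual :: "nat \<Rightarrow> (nat \<Rightarrow> 'a::field poly) set \<Rightarrow> bool" where
  "self_dual n C \<longleftrightarrow> C = dual_code n C"

end

theory Submission
  imports Defs "HOL-Computational_Algebra.Primes"
begin

text \<open>
  Evaluation at \<open>v = 0\<close> is a ring homomorphism \<open>R \<rightarrow> F\<^sub>q\<close>, and it maps a self-dual cyclic code
  \<open>C\<close> over \<open>R\<close> onto a self-dual cyclic code over \<open>F\<^sub>q\<close>: orthogonality survives the evaluation,
  and a word orthogonal to the image lifts, multiplied by \<open>1 - v\<^sup>2\<close>, to a word of \<open>C\<^sup>\<bottom> = C\<close>.

  Over a field of characteristic \<open>p\<close>, let \<open>\<mu>\<close> be the multiplicity of \<open>1\<close> as a root of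
  \<open>X\<^sup>n - 1\<close>; it is the largest power of \<open>p\<close> dividing \<open>n\<close>. A codeword \<open>c\<close> is orthogonal to all
  cyclic shifts of itself, i.e. \<open>X\<^sup>n - 1\<close> divides \<open>c(X) X\<^sup>n\<^sup>-\<^sup>1 c(1/X)\<close>, so \<open>\<mu> \<le> 2 ord\<^sub>1 c\<close>.
  On the other hand the word with reversed polynomial \<open>(X - 1)\<^bsup>\<lfloor>\<mu>/2\<rfloor>\<^esup> (X\<^sup>n - 1)/(X - 1)\<^sup>\<mu>\<close> is
  orthogonal to all of \<open>C\<close>, hence a codeword, and has \<open>ord\<^sub>1 = \<lfloor>\<mu>/2\<rfloor>\<close>. So \<open>\<mu>\<close> is even, which
  forces \<open>p = 2\<close> and \<open>2 | n\<close>; and the finite fields of characteristic 2 are those of order \<open>2\<^sup>k\<close>.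

  Conversely, in characteristic 2 and for \<open>n = 2h\<close>, the words whose coordinates vanish at \<open>v = 1\<close>
  and whose values at \<open>v = 0\<close> are invariant under the shift by \<open>h\<close> form a self-dual cyclic code.
\<close>

section \<open>Cyclic correlations of words and their polynomials\<close>

definition fdot :: "nat \<Rightarrow> (nat \<Rightarrow> 'a::comm_semiring_0) \<Rightarrow> (nat \<Rightarrow> 'a) \<Rightarrow> 'a" where
  "fdot n x y = (\<Sum>i<n. x i * y i)"

definition fdual :: "nat \<Rightarrow> (nat \<Rightarrow> 'a::comm_semiring_0) set \<Rightarrow> (nat \<Rightarrow> 'a) set" where
  "fdual n C = {x. (\<forall>i\<ge>n. x i = 0) \<and> (\<forall>y\<in>C. fdot n x y = 0)}"

definition cyclic_corr :: "nat \<Rightarrow> (nat \<Rightarrow> 'a::comm_semiring_0) \<Rightarrow> (nat \<Rightarrow> 'a) \<Rightarrow> nat \<Rightarrow> 'a" where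
  "cyclic_corr n c e l = (\<Sum>i<n. c i * e ((i + n - Suc l) mod n))"

definition word_poly :: "nat \<Rightarrow> (nat \<Rightarrow> 'a::comm_semiring_0) \<Rightarrow> 'a poly" where
  "word_poly n c = (\<Sum>i<n. monom (c i) i)"

definition rev_word :: "nat \<Rightarrow> (nat \<Rightarrow> 'a::zero) \<Rightarrow> nat \<Rightarrow> 'a" where
  "rev_word n c j = (if j < n then c (n - 1 - j) else 0)"

lemma fdot_commute: "fdot n x y = fdot n y x"
  unfolding fdot_def by (simp add: mult.commute)

lemma cyc_shift_funpow:
  assumes "i < n"
  shows "(cyc_shift n ^^ k) x i = x ((i + k * (n - 1)) mod n)"
  using assms
proof (induction k arbitrary: i)
  case (Suc k)
  have "(cyc_shift n ^^ Suc k) x i = (cyc_shift n ^^ k) x ((i + n - 1) mod n)"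
    using Suc.prems by (simp add: cyc_shift_def)
  also have "\<dots> = x (((i + n - 1) mod n + k * (n - 1)) mod n)"
    using Suc by simp
  also have "((i + n - 1) mod n + k * (n - 1)) mod n = (i + n - 1 + k * (n - 1)) mod n"
    by (simp add: mod_add_left_eq)
  also have "i + n - 1 + k * (n - 1) = i + Suc k * (n - 1)"
    using Suc.prems by simp
  finally show ?case .
qed simp

lemma cyc_shift_funpow_closed:
  assumes "\<forall>x\<in>C. cyc_shift n x \<in> C" "x \<in> C"
  shows "(cyc_shift n ^^ k) x \<in> C"
  by (induction k) (use assms in auto)

lemma cyclic_corr_eq_fdot_shift:
  assumes "l < n"
  shows "cyclic_corr n c e l = fdot n c ((cyc_shift n ^^ Suc l) e)"
  unfolding cyclic_corr_def fdot_def
proof (intro sum.cong refl arg_cong2[where f = "(*)"])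
  fix i assume "i \<in> {..<n}"
  have "i + Suc l * (n - 1) = (i + n - Suc l) + l * n"
    using assms by (simp add: algebra_simps diff_mult_distrib2)
  then show "e ((i + n - Suc l) mod n) = (cyc_shift n ^^ Suc l) e i"
    using \<open>i \<in> {..<n}\<close> by (simp add: cyc_shift_funpow del: funpow.simps)
qed

lemma cyclic_corr_last: "cyclic_corr n c e (n - 1) = fdot n c e"
  unfolding cyclic_corr_def fdot_def by (intro sum.cong refl) simp

lemma coeff_word_poly: "coeff (word_poly n c) k = (if k < n then c k else 0)"
  by (simp add: word_poly_def coeff_sum)

lemma word_poly_eq_0_iff: "word_poly n c = 0 \<longleftrightarrow> (\<forall>i<n. c i = 0)"
  by (auto simp: poly_eq_iff coeff_word_poly)

lemma degree_word_poly_less: "n > 0 \<Longrightarrow> degree (word_poly n c) < n"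
proof -
  assume "n > 0"
  have "degree (word_poly n c) \<le> n - 1"
    by (rule degree_le) (auto simp: coeff_word_poly)
  with \<open>n > 0\<close> show ?thesis by simp
qed

lemma word_poly_coeff: "degree p < n \<Longrightarrow> word_poly n (coeff p) = p"
  by (rule poly_eqI) (auto simp: coeff_word_poly coeff_eq_0)

lemma word_poly_rev_word_rev_word: "word_poly n (rev_word n (rev_word n c)) = word_poly n c"
  by (rule poly_eqI) (simp add: coeff_word_poly rev_word_def)

lemma word_poly_rev_word: "word_poly n (rev_word n c) = (\<Sum>j<n. monom (c j) (n - 1 - j))"
  unfolding word_poly_def rev_word_def
  by (rule sum.reindex_bij_witness[of _ "\<lambda>j. n - 1 - j" "\<lambda>j. n - 1 - j"]) auto


lemma X_pow_minus_1_dvd_monom_diff: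
  assumes "n > 0"
  shows "[:0, 1:] ^ n - 1 dvd monom (a::'a::comm_ring_1) t - monom a (t mod n)"
proof -
  have "([:0, 1:] ^ n - 1) * (\<Sum>i<t div n. ([:0, 1:] ^ n) ^ i) = ([:0, 1:] ^ n) ^ (t div n) - (1::'a poly)"
    by (rule power_diff_1_eq[symmetric])
  then have "[:0, 1:] ^ n - 1 dvd ([:0, 1:] ^ n) ^ (t div n) - (1::'a poly)"
    by (metis dvd_triv_left)
  moreover have "monom a t - monom a (t mod n)
      = smult a ([:0, 1:] ^ (t mod n) * (([:0, 1:] ^ n) ^ (t div n) - 1))"
  proof -
    have "[:0, 1:] ^ t = [:0, 1::'a:] ^ (t mod n) * ([:0, 1:] ^ n) ^ (t div n)"
      by (metis div_mult_mod_eq add.commute power_add power_mult mult.commute)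
    then show ?thesis by (simp add: monom_altdef algebra_simps smult_diff_right)
  qed
  ultimately show ?thesis by (metis dvd_mult dvd_smult)
qed

lemma degree_X_pow_minus_1: "n > 0 \<Longrightarrow> degree ([:0, 1:] ^ n - 1 :: 'a::comm_ring_1 poly) = n"
  unfolding diff_conv_add_uminus
  by (subst degree_add_eq_left) (simp_all add: degree_linear_power)

lemma word_poly_mult_rev_word:
  "word_poly n c * word_poly n (rev_word n e) = (\<Sum>i<n. \<Sum>j<n. monom (c i * e j) (i + n - Suc j))"
proof -
  have "word_poly n c * word_poly n (rev_word n e)
      = (\<Sum>i<n. \<Sum>j<n. monom (c i) i * monom (e j) (n - 1 - j))"
    by (simp only: word_poly_rev_word, simp only: word_poly_def sum_product)
  also have "\<dots> = (\<Sum>i<n. \<Sum>j<n. monom (c i * e j) (i + n - Suc j))"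
    by (intro sum.cong refl) (auto simp: mult_monom)
  finally show ?thesis .
qed

lemma cyclic_index_involution:
  fixes i j n :: nat
  assumes "i < n" "j < n"
  shows "(i + n - Suc ((i + n - Suc j) mod n)) mod n = j"
proof (cases "i + n - Suc j < n")
  case False
  then have "(i + n - Suc j) mod n = i + n - Suc j - n"
    using assms by (simp add: le_mod_geq)
  moreover have "i + n - Suc (i + n - Suc j - n) = j + n"
    using False assms by auto
  ultimately show ?thesis using assms by simp
qed (use assms in simp)

lemma cyclic_corr_poly:
  "(\<Sum>l<n. monom (cyclic_corr n c e l) l) = (\<Sum>i<n. \<Sum>j<n. monom (c i * e j) ((i + n - Suc j) mod n))"
proof -
  have reindex: "(\<Sum>l<n. monom (c i * e ((i + n - Suc l) mod n)) l)
      = (\<Sum>j<n. monom (c i * e j) ((i + n - Suc j) mod n))" if "i < n" for i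
    by (rule sum.reindex_bij_witness[of _ "\<lambda>j. (i + n - Suc j) mod n" "\<lambda>j. (i + n - Suc j) mod n"])
      (use that in \<open>auto simp: cyclic_index_involution\<close>)
  have "(\<Sum>l<n. monom (cyclic_corr n c e l) l) = (\<Sum>l<n. \<Sum>i<n. monom (c i * e ((i + n - Suc l) mod n)) l)"
    unfolding cyclic_corr_def by (simp add: monom_sum)
  also have "\<dots> = (\<Sum>i<n. \<Sum>l<n. monom (c i * e ((i + n - Suc l) mod n)) l)"
    by (rule sum.swap)
  also have "\<dots> = (\<Sum>i<n. \<Sum>j<n. monom (c i * e j) ((i + n - Suc j) mod n))"
    by (rule sum.cong[OF refl]) (simp add: reindex)
  finally show ?thesis .
qed

lemma X_pow_minus_1_dvd_word_poly_mult_iff: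
  fixes c e :: "nat \<Rightarrow> 'a::field"
  assumes "n > 0"
  shows "[:0, 1:] ^ n - 1 dvd word_poly n c * word_poly n (rev_word n e)
    \<longleftrightarrow> (\<forall>l<n. cyclic_corr n c e l = 0)"
proof -
  \<comment> \<open>Modulo \<open>X\<^sup>n - 1\<close> the product reduces to \<open>S\<close>, whose degree is less than \<open>n\<close>.\<close>
  define S where "S = (\<Sum>l<n. monom (cyclic_corr n c e l) l)"
  have "[:0, 1:] ^ n - 1 dvd word_poly n c * word_poly n (rev_word n e) - S"
    unfolding word_poly_mult_rev_word S_def cyclic_corr_poly sum_subtractf[symmetric]
    by (intro dvd_sum X_pow_minus_1_dvd_monom_diff assms)
  then have "[:0, 1:] ^ n - 1 dvd word_poly n c * word_poly n (rev_word n e)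
      \<longleftrightarrow> [:0, 1:] ^ n - 1 dvd S"
    by (metis dvd_add_right_iff diff_add_cancel)
  also have "\<dots> \<longleftrightarrow> S = 0"
  proof
    assume dvd: "[:0, 1:] ^ n - 1 dvd S"
    have "degree ([:0, 1::'a:] ^ n - 1) = n"
      using assms by (rule degree_X_pow_minus_1)
    moreover have "degree S < n"
      using degree_word_poly_less[OF assms] unfolding S_def word_poly_def .
    ultimately show "S = 0"
      using dvd_imp_degree_le[OF dvd] by fastforce
  qed simp
  also have "S = 0 \<longleftrightarrow> (\<forall>l<n. cyclic_corr n c e l = 0)"
    unfolding S_def using word_poly_eq_0_iff unfolding word_poly_def .
  finally show ?thesis .
qed

lemma word_poly_rev_word_reflect:
  fixes c :: "nat \<Rightarrow> 'a::comm_semiring_1"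
  assumes "n > 0"
  shows "word_poly n (rev_word n c) = monom 1 (n - 1 - degree (word_poly n c)) * reflect_poly (word_poly n c)"
proof (rule poly_eqI)
  fix k
  define d where "d = degree (word_poly n c)"
  have "d < n" unfolding d_def using assms by (rule degree_word_poly_less)
  have "c j = 0" if "d < j" "j < n" for j
    using that coeff_eq_0[of "word_poly n c" j] by (simp add: d_def coeff_word_poly)
  with \<open>d < n\<close> show "coeff (word_poly n (rev_word n c)) k
      = coeff (monom 1 (n - 1 - degree (word_poly n c)) * reflect_poly (word_poly n c)) k"
    by (auto simp: coeff_word_poly rev_word_def coeff_monom_mult coeff_reflect_poly d_def[symmetric]
        intro!: arg_cong[where f = c])
qed

lemma linear_power_dvd_reflect_poly:
  assumes "[:-1, 1::'a::idom:] ^ k dvd p"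
  shows "[:-1, 1:] ^ k dvd reflect_poly p"
proof -
  obtain g where "p = [:-1, 1:] ^ k * g" using assms by blast
  moreover have "reflect_poly [:-1, 1::'a:] = smult (-1) [:-1, 1:]"
    by (rule poly_eqI) (simp add: coeff_reflect_poly coeff_pCons split: nat.split)
  ultimately have "reflect_poly p = (smult (-1) [:-1, 1:]) ^ k * reflect_poly g"
    by (simp only: reflect_poly_mult reflect_poly_power)
  also have "\<dots> = [:-1, 1:] ^ k * smult ((-1) ^ k) (reflect_poly g)"
    by (simp only: smult_power mult_smult_left mult_smult_right)
  finally show ?thesis by (rule dvdI)
qed

lemma word_poly_rev_word_eq_0_iff: "word_poly n (rev_word n c) = 0 \<longleftrightarrow> word_poly n c = 0"
proof -
  have rev_0: "word_poly n (rev_word n d) = 0" if "word_poly n d = 0" for d :: "nat \<Rightarrow> 'a"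
    using that by (auto simp: word_poly_eq_0_iff rev_word_def)
  show ?thesis
    using rev_0[of c] rev_0[of "rev_word n c"] by (auto simp: word_poly_rev_word_rev_word)
qed

lemma order_1_word_poly_le_rev:
  assumes "n > 0" "word_poly n c \<noteq> 0"
  shows "order 1 (word_poly n c) \<le> order 1 (word_poly n (rev_word n c))"
proof -
  have "[:-1, 1:] ^ order 1 (word_poly n c) dvd word_poly n c"
    using order_1[of 1 "word_poly n c"] by simp
  then have "[:-1, 1:] ^ order 1 (word_poly n c) dvd word_poly n (rev_word n c)"
    unfolding word_poly_rev_word_reflect[OF assms(1)] by (intro dvd_mult linear_power_dvd_reflect_poly)
  then show ?thesis
    using assms(2) by (simp add: order_divides word_poly_rev_word_eq_0_iff)
qed

lemma order_1_word_poly_rev: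
  assumes "n > 0" "word_poly n c \<noteq> 0"
  shows "order 1 (word_poly n (rev_word n c)) = order 1 (word_poly n c)"
  using order_1_word_poly_le_rev[OF assms] assms
    order_1_word_poly_le_rev[OF assms(1), of "rev_word n c"]
  by (simp add: word_poly_rev_word_rev_word word_poly_rev_word_eq_0_iff)

lemma word_poly_rev_word_coeff:
  assumes "n > 0" "degree g < n" "g \<noteq> 0"
  shows "word_poly n (rev_word n (coeff g)) \<noteq> 0" "order 1 (word_poly n (rev_word n (coeff g))) = order 1 g"
proof -
  have g: "word_poly n (rev_word n (rev_word n (coeff g))) = g"
    unfolding word_poly_rev_word_rev_word using assms(2) by (rule word_poly_coeff)
  with assms(3) show nonzero: "word_poly n (rev_word n (coeff g)) \<noteq> 0"
    by (metis word_poly_rev_word_eq_0_iff)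
  show "order 1 (word_poly n (rev_word n (coeff g))) = order 1 g"
    using order_1_word_poly_rev[OF assms(1) nonzero] g by simp
qed

section \<open>The multiplicity of 1 as a root of \<open>X\<^sup>n - 1\<close>\<close>

lemma order_power: "p \<noteq> 0 \<Longrightarrow> order a (p ^ k) = k * order a (p :: 'a::idom poly)"
  by (induction k) (simp_all add: order_mult)

lemma order_1_X_pow_minus_1:
  assumes "n > 0" and prime: "prime CHAR('a::field)"
  shows "order 1 ([:0, 1:] ^ n - 1 :: 'a poly) = CHAR('a) ^ multiplicity CHAR('a) n"
proof -
  define p where "p = CHAR('a)"
  define a where "a = multiplicity p n"
  define X :: "'a poly" where "X = [:0, 1:]"
  obtain m where m: "n = p ^ a * m" "\<not> p dvd m"
  proof (rule multiplicity_decompose')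
    show "n \<noteq> 0" "\<not> is_unit p" using assms by (auto simp: p_def)
  qed (simp add: a_def)
  have prime_poly: "prime CHAR('a poly)" using prime by simp
  have "(1 + - 1 :: 'a poly) ^ p ^ a = 1 ^ p ^ a + (- 1) ^ p ^ a"
    by (rule freshmans_dream'[OF prime_poly]) (simp add: p_def)
  then have minus_one: "(- 1 :: 'a poly) ^ p ^ a = - 1"
    using prime by (simp add: p_def prime_gt_0_nat power_0_left eq_neg_iff_add_eq_0 add.commute)
  have "(X ^ m + - 1) ^ p ^ a = (X ^ m) ^ p ^ a + (- 1) ^ p ^ a"
    by (rule freshmans_dream'[OF prime_poly]) (simp add: p_def)
  then have frobenius: "X ^ n - 1 = (X ^ m - 1) ^ p ^ a"
    using minus_one m(1) by (simp add: power_mult[symmetric] mult.commute)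
  have factor: "X ^ m - 1 = [:-1, 1:] * (\<Sum>i<m. X ^ i)"
    using power_diff_1_eq[of X m] by (simp add: X_def one_pCons)
  have "poly (\<Sum>i<m. X ^ i) 1 = of_nat m"
    by (simp add: X_def poly_sum)
  then have cofactor: "poly (\<Sum>i<m. X ^ i) 1 \<noteq> 0"
    using m(2) by (simp add: p_def of_nat_eq_0_iff_char_dvd)
  then have "(\<Sum>i<m. X ^ i) \<noteq> 0" by auto
  then have nonzero: "X ^ m - 1 \<noteq> 0"
    unfolding factor by (intro no_zero_divisors) simp_all
  have "order 1 (X ^ m - 1) = order 1 [:-1, 1::'a:] + order 1 (\<Sum>i<m. X ^ i)"
    using nonzero unfolding factor by (rule order_mult)
  also have "\<dots> = 1"
    using order_0I[OF cofactor] order_power_n_n[of 1 1] by simp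
  finally have "order 1 (X ^ m - 1) = 1" .
  with nonzero show ?thesis
    unfolding X_def[symmetric] frobenius by (simp add: order_power p_def a_def)
qed

lemma even_order_1_X_pow_minus_1D:
  assumes "n > 0" and prime: "prime CHAR('a::field)"
    and "even (order 1 ([:0, 1:] ^ n - 1 :: 'a poly))"
  shows "CHAR('a) = 2 \<and> even n"
proof -
  have "even (CHAR('a) ^ multiplicity CHAR('a) n)"
    using assms by (simp add: order_1_X_pow_minus_1)
  then have "even CHAR('a)" and "multiplicity CHAR('a) n > 0"
    by (simp_all add: even_power)
  then have "CHAR('a) = 2"
    using prime by (metis primes_dvd_imp_eq two_is_prime_nat)
  moreover have "CHAR('a) ^ multiplicity CHAR('a) n dvd n"
    by (rule multiplicity_dvd)
  ultimately show ?thesis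
    using \<open>multiplicity CHAR('a) n > 0\<close> by (metis dvd_power dvd_trans)
qed

section \<open>Self-dual cyclic codes over a field\<close>

lemma order_1_X_pow_minus_1_le_twice:
  fixes C :: "(nat \<Rightarrow> 'a::field) set"
  assumes n: "n > 0" and self_dual: "C = fdual n C" and cyclic: "\<forall>x\<in>C. cyc_shift n x \<in> C"
    and c: "c \<in> C" "word_poly n c \<noteq> 0"
  shows "order 1 ([:0, 1:] ^ n - 1 :: 'a poly) \<le> 2 * order 1 (word_poly n c)"
proof -
  have "cyclic_corr n c c l = 0" if "l < n" for l
  proof -
    have "(cyc_shift n ^^ Suc l) c \<in> C"
      using cyclic c(1) by (rule cyc_shift_funpow_closed)
    then show ?thesis
      using c(1) self_dual that by (subst cyclic_corr_eq_fdot_shift) (auto simp: fdual_def)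
  qed
  then have "[:0, 1:] ^ n - 1 dvd word_poly n c * word_poly n (rev_word n c)"
    using X_pow_minus_1_dvd_word_poly_mult_iff[OF n] by blast
  then have "[:-1, 1:] ^ order 1 ([:0, 1:] ^ n - 1 :: 'a poly) dvd word_poly n c * word_poly n (rev_word n c)"
    using order_1[of 1 "[:0, 1:] ^ n - 1 :: 'a poly"] by (simp add: dvd_trans)
  moreover have "word_poly n c * word_poly n (rev_word n c) \<noteq> 0"
    using c(2) by (simp add: word_poly_rev_word_eq_0_iff)
  ultimately have "order 1 ([:0, 1:] ^ n - 1 :: 'a poly) \<le> order 1 (word_poly n c * word_poly n (rev_word n c))"
    by (simp add: order_divides)
  also have "\<dots> = 2 * order 1 (word_poly n c)"
    using \<open>word_poly n c * word_poly n (rev_word n c) \<noteq> 0\<close>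
    by (simp add: order_mult order_1_word_poly_rev[OF n c(2)])
  finally show ?thesis .
qed

lemma rev_word_coeff_in_self_dual:
  fixes C :: "(nat \<Rightarrow> 'a::field) set"
  assumes n: "n > 0" and self_dual: "C = fdual n C" and "degree g < n"
    and dvd: "\<And>y. y \<in> C \<Longrightarrow> [:0, 1:] ^ n - 1 dvd word_poly n y * g"
  shows "rev_word n (coeff g) \<in> C"
proof -
  have g: "word_poly n (rev_word n (rev_word n (coeff g))) = g"
    unfolding word_poly_rev_word_rev_word using \<open>degree g < n\<close> by (rule word_poly_coeff)
  have "fdot n (rev_word n (coeff g)) y = 0" if "y \<in> C" for y
  proof -
    have "\<forall>l<n. cyclic_corr n y (rev_word n (coeff g)) l = 0"
      using dvd[OF that] X_pow_minus_1_dvd_word_poly_mult_iff[OF n, of y "rev_word n (coeff g)"]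
      unfolding g by blast
    then have "cyclic_corr n y (rev_word n (coeff g)) (n - 1) = 0"
      using n by simp
    then show ?thesis
      by (simp only: cyclic_corr_last fdot_commute[of n y])
  qed
  then have "rev_word n (coeff g) \<in> fdual n C"
    by (simp add: fdual_def rev_word_def)
  then show ?thesis
    using self_dual by simp
qed

lemma power_mult_dvd_mult_power:
  fixes a :: "'a::comm_semiring_1"
  assumes "k \<le> m" "a ^ (m - k) dvd p"
  shows "a ^ m * u dvd p * (a ^ k * u)"
proof -
  obtain h where "p = a ^ (m - k) * h" using assms(2) ..
  then have "p * (a ^ k * u) = a ^ (m - k + k) * u * h"
    by (simp only: power_add mult_ac)
  then show ?thesis
    using assms(1) by simp
qed

lemma even_order_1_X_pow_minus_1_if_self_dual_cyclic:
  fixes C :: "(nat \<Rightarrow> 'a::field) set"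
  assumes n: "n > 0" and self_dual: "C = fdual n C" and cyclic: "\<forall>x\<in>C. cyc_shift n x \<in> C"
  shows "even (order 1 ([:0, 1:] ^ n - 1 :: 'a poly))"
proof -
  define \<mu> where "\<mu> = order 1 ([:0, 1:] ^ n - 1 :: 'a poly)"
  note bound = order_1_X_pow_minus_1_le_twice[OF n self_dual cyclic, folded \<mu>_def]
  have nonzero: "[:0, 1:] ^ n - 1 \<noteq> (0 :: 'a poly)"
    using degree_X_pow_minus_1[OF n, where 'a = 'a] n by auto
  then have "\<mu> \<ge> 1"
    using order_gt_0_iff[OF nonzero, of 1] unfolding \<mu>_def by simp
  obtain u :: "'a poly" where u: "[:0, 1:] ^ n - 1 = [:-1, 1:] ^ \<mu> * u" "\<not> [:-1, 1:] dvd u"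
    using order_decomp[OF nonzero, of 1] unfolding \<mu>_def by auto
  then have "u \<noteq> 0" and "order 1 u = 0"
    by (auto simp: order_0I poly_eq_0_iff_dvd)
  have degree_factor: "degree ([:-1, 1::'a:] ^ k * u) = k + degree u" for k
    using \<open>u \<noteq> 0\<close> by (simp add: degree_mult_eq degree_linear_power)
  \<comment> \<open>\<open>g\<close> keeps only half of the factor \<open>(X - 1)\<^sup>\<mu>\<close>; by the bound above it is still
    orthogonal to every codeword, and then the bound applied to \<open>g\<close> itself forces \<open>\<mu>\<close> to be even.\<close>
  define g where "g = [:-1, 1::'a:] ^ (\<mu> div 2) * u"
  have "degree g < n"
    using degree_X_pow_minus_1[OF n, where 'a = 'a] degree_factor[of \<mu>] degree_factor[of "\<mu> div 2"]
      \<open>\<mu> \<ge> 1\<close> unfolding u(1) g_def by linarith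
  moreover have "[:0, 1:] ^ n - 1 dvd word_poly n y * g" if "y \<in> C" for y
  proof (cases "word_poly n y = 0")
    case False
    then have "[:-1, 1:] ^ (\<mu> - \<mu> div 2) dvd word_poly n y"
      using bound[OF that] by (simp add: order_divides)
    then show ?thesis
      unfolding u(1) g_def by (intro power_mult_dvd_mult_power) simp_all
  qed simp
  ultimately have "rev_word n (coeff g) \<in> C"
    by (intro rev_word_coeff_in_self_dual n self_dual)
  moreover have "g \<noteq> 0"
    using \<open>u \<noteq> 0\<close> by (simp add: g_def)
  ultimately have "\<mu> \<le> 2 * order 1 g"
    using bound word_poly_rev_word_coeff[OF n \<open>degree g < n\<close>] by metis
  also have "order 1 g = \<mu> div 2"
    unfolding g_def using \<open>u \<noteq> 0\<close> \<open>order 1 u = 0\<close>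
    by (subst order_mult) (simp_all add: order_power_n_n[of 1, simplified])
  finally have "\<mu> \<le> 2 * (\<mu> div 2)" .
  then have "\<mu> mod 2 = 0"
    using mult_div_mod_eq[of 2 \<mu>] by linarith
  then show ?thesis
    unfolding \<mu>_def[symmetric] by (simp only: dvd_eq_mod_eq_0)
qed

section \<open>Reduction modulo \<open>v\<close>\<close>

lemma poly_mod_eq_if_root:
  assumes "poly q a = 0"
  shows "poly (p mod q) a = poly (p :: 'a::field poly) a"
proof -
  have "poly p a = poly q a * poly (p div q) a + poly (p mod q) a"
    by (metis div_mult_mod_eq poly_add poly_mult mult.commute)
  with assms show ?thesis by simp
qed

lemma poly_vpoly_0 [simp]: "poly (vpoly :: 'a::field poly) 0 = 0"
  by (simp add: vpoly_def)

lemma poly_vpoly_1 [simp]: "poly (vpoly :: 'a::field poly) 1 = 0"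
  by (simp add: vpoly_def)

definition eval_at_0 :: "(nat \<Rightarrow> 'a::comm_semiring_0 poly) \<Rightarrow> nat \<Rightarrow> 'a" where
  "eval_at_0 x i = poly (x i) 0"

lemma eval_at_0_cyc_shift: "eval_at_0 (cyc_shift n x) = cyc_shift n (eval_at_0 x)"
  by (auto simp: eval_at_0_def cyc_shift_def fun_eq_iff)

lemma fdot_eval_at_0: "fdot n (eval_at_0 x) (eval_at_0 y) = poly (inner n x y) (0::'a::field)"
  by (simp add: fdot_def eval_at_0_def inner_def poly_mod_eq_if_root poly_sum)

lemma inner_smult_eq_0_if_fdot_eq_0:
  fixes a :: "nat \<Rightarrow> 'a::field"
  assumes "fdot n a (eval_at_0 y) = 0"
  shows "inner n (\<lambda>i. smult (a i) [:1, 0, -1:]) y = 0"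
proof -
  define f where "f = (\<Sum>i<n. smult (a i) (y i))"
  have "poly f 0 = 0"
    using assms by (simp add: f_def fdot_def eval_at_0_def poly_sum)
  then obtain f' where f': "f = [:0, 1:] * f'"
    by (auto simp: poly_eq_0_iff_dvd elim: dvdE)
  have "(\<Sum>i<n. smult (a i) [:1, 0, -1:] * y i) = [:1, 0, -1:] * f"
    unfolding f_def sum_distrib_left by (simp only: mult_smult_left mult_smult_right)
  also have "\<dots> = vpoly * (- f')"
    by (simp add: f' vpoly_def)
  finally show ?thesis
    by (simp add: inner_def)
qed

lemma fdual_image_eval_at_0_subset:
  fixes C :: "(nat \<Rightarrow> 'a::field poly) set"
  assumes "C = dual_code n C"
  shows "fdual n (eval_at_0 ` C) \<subseteq> eval_at_0 ` C"
proof
  fix a assume a: "a \<in> fdual n (eval_at_0 ` C)"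
  \<comment> \<open>\<open>1 - v\<^sup>2\<close> is \<open>1\<close> at \<open>v = 0\<close> and \<open>(1 - v\<^sup>2) v = -(v\<^sup>3 - v)\<close>.\<close>
  define x where "x i = smult (a i) [:1, 0, -1:]" for i
  have "x \<in> dual_code n C"
    unfolding dual_code_def words_def Rset_def
  proof (intro CollectI conjI allI impI ballI)
    fix i
    show "degree (x i) < 3" using degree_smult_le[of "a i" "[:1, 0, -1:]"] by (simp add: x_def)
    show "n \<le> i \<Longrightarrow> x i = 0" using a by (simp add: x_def fdual_def)
  next
    fix y assume "y \<in> C"
    then show "inner n x y = 0"
      using a unfolding x_def by (intro inner_smult_eq_0_if_fdot_eq_0) (auto simp: fdual_def)
  qed
  moreover have "eval_at_0 x = a" by (simp add: eval_at_0_def x_def fun_eq_iff)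
  ultimately show "a \<in> eval_at_0 ` C" using assms by blast
qed

theorem self_dual_cyclic_image_eval_at_0:
  fixes C :: "(nat \<Rightarrow> 'a::field poly) set"
  assumes "cyclic_code n C" "self_dual n C"
  shows "eval_at_0 ` C = fdual n (eval_at_0 ` C)" and "\<forall>x\<in>eval_at_0 ` C. cyc_shift n x \<in> eval_at_0 ` C"
proof -
  have C: "C = dual_code n C" using assms(2) unfolding self_dual_def .
  have "eval_at_0 ` C \<subseteq> fdual n (eval_at_0 ` C)"
  proof
    fix a assume "a \<in> eval_at_0 ` C"
    then obtain x where x: "x \<in> C" "a = eval_at_0 x" by blast
    then have "x \<in> dual_code n C" using C by simp
    then show "a \<in> fdual n (eval_at_0 ` C)"
      unfolding x(2) by (auto simp: fdual_def dual_code_def words_def eval_at_0_def fdot_eval_at_0)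
  qed
  then show "eval_at_0 ` C = fdual n (eval_at_0 ` C)"
    using fdual_image_eval_at_0_subset[OF C] by (rule equalityI)
  show "\<forall>x\<in>eval_at_0 ` C. cyc_shift n x \<in> eval_at_0 ` C"
    using assms(1) unfolding cyclic_code_def by (auto simp flip: eval_at_0_cyc_shift)
qed

section \<open>Finite fields of characteristic 2\<close>

lemma prime_CHAR_finite_field: "prime CHAR('a::{field,finite})"
  by (intro prime_CHAR_semidom finite_imp_CHAR_pos) simp

lemma add_self_CHAR_2: "CHAR('a::ring_1) = 2 \<Longrightarrow> (x::'a) + x = 0"
  by (metis uminus_CHAR_2 add.right_inverse)

lemma finite_field_power_card_minus_1:
  fixes x :: "'a::{field,finite}"
  assumes "x \<noteq> 0"
  shows "x ^ (card (UNIV :: 'a set) - 1) = 1"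
proof -
  have "x ^ card (UNIV - {0::'a}) * (\<Prod>y\<in>UNIV - {0}. y) = (\<Prod>y\<in>UNIV - {0::'a}. x * y)"
    by (simp add: prod.distrib)
  also have "\<dots> = (\<Prod>y\<in>UNIV - {0}. y)"
    by (rule prod.reindex_bij_witness[of _ "\<lambda>y. y / x" "\<lambda>y. x * y"]) (use assms in auto)
  finally show ?thesis
    by (simp add: card_Diff_singleton)
qed

lemma CHAR_2_if_card_power_of_2:
  assumes "card (UNIV :: 'a::{field,finite} set) = 2 ^ k"
  shows "CHAR('a) = 2"
proof -
  have "card {0::'a, 1} \<le> card (UNIV :: 'a set)"
    by (rule card_mono) simp_all
  then have "k > 0"
    using assms by (cases k) simp_all
  then have "odd (card (UNIV :: 'a set) - 1)"
    using assms by simp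
  then have "(- 1 :: 'a) = 1"
    using finite_field_power_card_minus_1[of "- 1 :: 'a"] by simp
  then have "of_nat 2 = (0 :: 'a)"
    by (metis add_eq_0_iff one_add_one of_nat_numeral)
  then have "CHAR('a) dvd 2"
    by (simp only: of_nat_eq_0_iff_char_dvd)
  then show ?thesis
    using prime_CHAR_finite_field two_is_prime_nat primes_dvd_imp_eq by blast
qed

definition subset_sums :: "'a::comm_monoid_add set \<Rightarrow> 'a set" where
  "subset_sums B = sum (\<lambda>x. x) ` Pow B"

lemma subset_sums_insert:
  assumes "finite B" "a \<notin> B"
  shows "subset_sums (insert a B) = subset_sums B \<union> (\<lambda>s. a + s) ` subset_sums B"
proof -
  have "sum (\<lambda>x. x) (insert a S) = a + sum (\<lambda>x. x) S" if "S \<subseteq> B" for S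
    using that assms finite_subset by (subst sum.insert) auto
  then show ?thesis
    unfolding subset_sums_def Pow_insert image_Un image_image by (auto intro: image_cong)
qed

lemma subset_sums_add_closed:
  assumes "CHAR('a::comm_ring_1) = 2" "finite B" "s \<in> subset_sums B" "t \<in> subset_sums B"
  shows "s + (t::'a) \<in> subset_sums B"
proof -
  obtain S T where ST: "S \<subseteq> B" "T \<subseteq> B" "s = \<Sum>S" "t = \<Sum>T"
    using assms(3,4) unfolding subset_sums_def by blast
  then have fin: "finite S" "finite T"
    using assms(2) finite_subset by blast+
  have "s + t = \<Sum>(S - T) + \<Sum>(T - S) + (\<Sum>(S \<inter> T) + \<Sum>(S \<inter> T))"
    unfolding ST(3,4) using fin
    by (simp add: sum.Int_Diff[of S "\<lambda>x. x" T] sum.Int_Diff[of T "\<lambda>x. x" S] Int_commute ac_simps)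
  also have "\<dots> = \<Sum>((S - T) \<union> (T - S))"
    using fin by (simp add: add_self_CHAR_2[OF assms(1)] sum.union_disjoint Diff_Int_distrib2 Int_Diff)
  finally show ?thesis
    using ST unfolding subset_sums_def by blast
qed

lemma card_subset_sums_power_of_2:
  fixes B :: "'a::comm_ring_1 set"
  assumes "CHAR('a) = 2" "finite B"
  shows "\<exists>k. card (subset_sums B) = 2 ^ k"
  using assms(2)
proof (induction B rule: finite_induct)
  case empty
  have "card (subset_sums ({} :: 'a set)) = 2 ^ 0" by (simp add: subset_sums_def)
  then show ?case ..
next
  case (insert a B)
  obtain k where k: "card (subset_sums B) = 2 ^ k" using insert.IH ..
  have fin: "finite (subset_sums B)"
    unfolding subset_sums_def using insert.hyps(1) by simp
  have closed: "s + t \<in> subset_sums B" if "s \<in> subset_sums B" "t \<in> subset_sums B" for s t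
    using subset_sums_add_closed[OF assms(1) insert.hyps(1) that] .
  show ?case
  proof (cases "a \<in> subset_sums B")
    case True
    then have "subset_sums (insert a B) = subset_sums B"
      using closed unfolding subset_sums_insert[OF insert.hyps] by auto
    then show ?thesis using k by auto
  next
    case False
    have "subset_sums B \<inter> (\<lambda>s. a + s) ` subset_sums B = {}"
    proof (rule ccontr)
      assume "subset_sums B \<inter> (\<lambda>s. a + s) ` subset_sums B \<noteq> {}"
      then obtain s where "s \<in> subset_sums B" "a + s \<in> subset_sums B" by auto
      then have "(a + s) + s \<in> subset_sums B" by (rule closed[rotated])
      then show False
        using False by (simp add: add.assoc add_self_CHAR_2[OF assms(1)])
    qed
    moreover have "card ((\<lambda>s. a + s) ` subset_sums B) = card (subset_sums B)"
      by (rule card_image) (simp add: inj_on_def)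
    ultimately have "card (subset_sums (insert a B)) = 2 ^ Suc k"
      unfolding subset_sums_insert[OF insert.hyps] using fin k by (simp add: card_Un_disjoint)
    then show ?thesis ..
  qed
qed

lemma card_power_of_2_if_CHAR_2:
  assumes "CHAR('a::{field,finite}) = 2"
  shows "\<exists>k. card (UNIV :: 'a set) = 2 ^ k"
proof -
  have "subset_sums (UNIV :: 'a set) = UNIV"
    unfolding subset_sums_def by (auto intro: image_eqI[where x = "{_}"])
  then show ?thesis
    using card_subset_sums_power_of_2[OF assms, of UNIV] by simp
qed

section \<open>A self-dual cyclic code over \<open>R\<close> in characteristic 2\<close>

lemma vpoly_CHAR_2:
  assumes "CHAR('a::field) = 2"
  shows "(vpoly :: 'a poly) = [:0, 1:] * [:-1, 1:] ^ 2"
proof -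
  have "(2 :: 'a) = 0" and "- 1 = (1 :: 'a)"
    using assms of_nat_CHAR[where 'a = 'a] uminus_CHAR_2[OF assms, of 1] by simp_all
  then show ?thesis
    by (simp add: vpoly_def power2_eq_square)
qed

lemma vpoly_dvd_iff_CHAR_2:
  assumes "CHAR('a::field) = 2"
  shows "vpoly dvd (p :: 'a poly) \<longleftrightarrow> poly p 0 = 0 \<and> [:-1, 1:] ^ 2 dvd p"
proof
  assume "vpoly dvd p"
  moreover have "[:-1, 1:] ^ 2 dvd (vpoly :: 'a poly)"
    unfolding vpoly_CHAR_2[OF assms] by (rule dvd_triv_right)
  ultimately show "poly p 0 = 0 \<and> [:-1, 1:] ^ 2 dvd p"
    by (auto elim: dvdE dvd_trans)
next
  assume p: "poly p 0 = 0 \<and> [:-1, 1:] ^ 2 dvd p"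
  then obtain t where t: "p = [:-1, 1:] ^ 2 * t" by (elim conjE dvdE)
  then have "poly t 0 = 0" using p by simp
  then obtain t' where "t = [:0, 1:] * t'"
    by (auto simp: poly_eq_0_iff_dvd elim: dvdE)
  then have "p = vpoly * t'"
    unfolding t vpoly_CHAR_2[OF assms] by (simp only: mult_ac)
  then show "vpoly dvd p" ..
qed

lemma half_shift_twice:
  assumes "n = 2 * h"
  shows "((k + h) mod n + h) mod n = k mod (n::nat)"
proof -
  have "((k + h) mod n + h) mod n = (k + n) mod n"
    using assms by (simp add: mod_add_left_eq add.assoc mult_2)
  then show ?thesis by simp
qed

lemma half_shift_eq_iff:
  assumes "n = 2 * h" "k < n" "i < n"
  shows "(k + h) mod n = i \<longleftrightarrow> k = (i + h) mod (n::nat)"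
  using half_shift_twice[OF assms(1), of k] half_shift_twice[OF assms(1), of i] assms(2,3) by auto

lemma half_shift_neq:
  assumes "n = 2 * h" "i < n"
  shows "(i + h) mod n \<noteq> (i::nat)"
proof (cases "i + h < n")
  case False
  then have "(i + h) mod n = i + h - n"
    using assms by (simp add: le_mod_geq)
  with assms False show ?thesis by linarith
qed (use assms in simp)

lemma sum_lessThan_add: "(\<Sum>i<h + k. f i) = (\<Sum>i<h. f i) + (\<Sum>i<k. f (i + h :: nat))"
  by (induction k) (simp_all add: ac_simps)

text \<open>In characteristic 2, \<open>v\<^sup>3 - v = v (v - 1)\<^sup>2\<close>, so \<open>R \<cong> F \<times> F[v]/(v - 1)\<^sup>2\<close>, and
  \<open>half_period_code n h\<close> is the product of the code \<open>{(a, a)}\<close> of length \<open>n = 2h\<close> over the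
  first factor and of \<open>((v - 1))\<^sup>n\<close> over the second; both are self-dual.\<close>

definition half_period_code :: "nat \<Rightarrow> nat \<Rightarrow> (nat \<Rightarrow> 'a::field poly) set" where
  "half_period_code n h = {x \<in> words n. \<forall>i<n. poly (x i) 1 = 0 \<and> poly (x i) 0 = poly (x ((i + h) mod n)) 0}"

lemma degree_mod_vpoly_less: "degree (p mod vpoly) < 3"
proof -
  have "degree (vpoly :: 'a::field poly) = 3" by (simp add: vpoly_def)
  then show ?thesis using degree_mod_less[of vpoly p] by fastforce
qed

lemma half_period_codeI:
  assumes "\<And>i. i < n \<Longrightarrow> degree (x i) < 3 \<and> poly (x i) 1 = 0 \<and> poly (x i) 0 = poly (x ((i + h) mod n)) 0"
    and "\<And>i. n \<le> i \<Longrightarrow> x i = 0"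
  shows "x \<in> half_period_code n h"
  using assms unfolding half_period_code_def words_def Rset_def by blast

lemma half_period_codeD:
  assumes "x \<in> half_period_code n h" "i < n"
  shows "degree (x i) < 3" "poly (x i) 1 = 0" "poly (x i) 0 = poly (x ((i + h) mod n)) 0"
  using assms unfolding half_period_code_def words_def Rset_def by blast+

lemma half_period_code_eq_0_beyond: "x \<in> half_period_code n h \<Longrightarrow> n \<le> i \<Longrightarrow> x i = 0"
  unfolding half_period_code_def words_def by blast

lemma linear_half_period_code: "linear_code n (half_period_code n h :: (nat \<Rightarrow> 'a::field poly) set)"
  unfolding linear_code_def
proof (intro conjI ballI)
  show "half_period_code n h \<subseteq> words n" unfolding half_period_code_def by blast
  show "(\<lambda>i. 0) \<in> (half_period_code n h :: (nat \<Rightarrow> 'a poly) set)"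
    by (rule half_period_codeI) simp_all
next
  fix x y :: "nat \<Rightarrow> 'a poly"
  assume x: "x \<in> half_period_code n h" and y: "y \<in> half_period_code n h"
  show "(\<lambda>i. x i + y i) \<in> half_period_code n h"
  proof (rule half_period_codeI)
    fix i assume "i < n"
    with half_period_codeD[OF x \<open>i < n\<close>] half_period_codeD[OF y \<open>i < n\<close>]
    show "degree (x i + y i) < 3 \<and> poly (x i + y i) 1 = 0
      \<and> poly (x i + y i) 0 = poly (x ((i + h) mod n) + y ((i + h) mod n)) 0"
      by (simp add: degree_add_less)
  qed (simp add: half_period_code_eq_0_beyond[OF x] half_period_code_eq_0_beyond[OF y])
next
  fix r :: "'a poly" and x :: "nat \<Rightarrow> 'a poly"
  assume x: "x \<in> half_period_code n h"
  show "(\<lambda>i. rmul r (x i)) \<in> half_period_code n h"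
  proof (rule half_period_codeI)
    fix i assume "i < n"
    with half_period_codeD[OF x \<open>i < n\<close>]
    show "degree (rmul r (x i)) < 3 \<and> poly (rmul r (x i)) 1 = 0
      \<and> poly (rmul r (x i)) 0 = poly (rmul r (x ((i + h) mod n))) 0"
      by (simp add: rmul_def degree_mod_vpoly_less poly_mod_eq_if_root)
  qed (simp add: half_period_code_eq_0_beyond[OF x] rmul_def)
qed

lemma cyc_shift_half_shift_index:
  assumes "0 < n"
  shows "((i + h) mod n + n - 1) mod n = ((i + n - 1) mod n + h) mod (n::nat)"
proof -
  have "((i + h) mod n + n - 1) mod n = ((i + h) mod n + (n - 1)) mod n"
    using assms by (simp only: Nat.add_diff_assoc Suc_leI)
  also have "\<dots> = (i + h + (n - 1)) mod n"
    by (rule mod_add_left_eq)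
  also have "(i + h + (n - 1)) mod n = (i + (n - 1) + h) mod n"
    by (simp add: ac_simps)
  also have "\<dots> = ((i + n - 1) mod n + h) mod n"
    using assms by (simp only: mod_add_left_eq Nat.add_diff_assoc Suc_leI)
  finally show ?thesis .
qed

lemma cyclic_half_period_code: "cyclic_code n (half_period_code n h :: (nat \<Rightarrow> 'a::field poly) set)"
  unfolding cyclic_code_def
proof
  fix x :: "nat \<Rightarrow> 'a poly" assume x: "x \<in> half_period_code n h"
  show "cyc_shift n x \<in> half_period_code n h"
  proof (rule half_period_codeI)
    fix i assume "i < n"
    define j where "j = (i + n - 1) mod n"
    have "j < n" "cyc_shift n x i = x j"
      using \<open>i < n\<close> by (simp_all add: j_def cyc_shift_def)
    have "(i + h) mod n < n"
      using \<open>i < n\<close> by simp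
    then have "cyc_shift n x ((i + h) mod n) = x (((i + h) mod n + n - 1) mod n)"
      unfolding cyc_shift_def by (rule if_P)
    also have "((i + h) mod n + n - 1) mod n = (j + h) mod n"
      unfolding j_def using \<open>i < n\<close> by (intro cyc_shift_half_shift_index) simp
    finally have "cyc_shift n x ((i + h) mod n) = x ((j + h) mod n)" .
    with \<open>cyc_shift n x i = x j\<close> half_period_codeD[OF x \<open>j < n\<close>]
    show "degree (cyc_shift n x i) < 3 \<and> poly (cyc_shift n x i) 1 = 0
      \<and> poly (cyc_shift n x i) 0 = poly (cyc_shift n x ((i + h) mod n)) 0"
      by simp
  qed (simp add: cyc_shift_def)
qed

lemma self_orthogonal_half_period_code:
  assumes "CHAR('a::field) = 2" "n = 2 * h"
    and x: "x \<in> half_period_code n h" and y: "y \<in> (half_period_code n h :: (nat \<Rightarrow> 'a poly) set)"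
  shows "inner n x y = 0"
proof -
  have "[:-1, 1:] ^ 2 dvd x i * y i" if "i < n" for i
    unfolding power2_eq_square using half_period_codeD(2)[OF x that] half_period_codeD(2)[OF y that]
    by (intro mult_dvd_mono) (simp_all add: poly_eq_0_iff_dvd)
  then have "[:-1, 1:] ^ 2 dvd (\<Sum>i<n. x i * y i)"
    by (auto intro: dvd_sum)
  moreover have "poly (\<Sum>i<n. x i * y i) 0 = 0"
  proof -
    define f where "f i = poly (x i) 0 * poly (y i) 0" for i
    have periodic: "f (i + h) = f i" if "i < h" for i
      using half_period_codeD(3)[OF x, of i] half_period_codeD(3)[OF y, of i] that assms(2)
      by (simp add: f_def)
    have "poly (\<Sum>i<n. x i * y i) 0 = (\<Sum>i<h. f i) + (\<Sum>i<h. f (i + h))"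
      unfolding assms(2) mult_2 sum_lessThan_add[symmetric] by (simp add: f_def poly_sum)
    also have "(\<Sum>i<h. f (i + h)) = (\<Sum>i<h. f i)"
      by (rule sum.cong) (simp_all add: periodic)
    finally show ?thesis
      by (simp add: add_self_CHAR_2[OF assms(1)])
  qed
  ultimately have "vpoly dvd (\<Sum>i<n. x i * y i)"
    using vpoly_dvd_iff_CHAR_2[OF assms(1)] by blast
  then show ?thesis
    unfolding inner_def by (rule dvd_imp_mod_0)
qed

lemma inner_indicator_word:
  assumes "S \<subseteq> {..<n}"
  shows "inner n x (\<lambda>k. if k \<in> S then e else 0) = ((\<Sum>k\<in>S. x k) * e) mod vpoly"
proof -
  have "(\<Sum>k<n. x k * (if k \<in> S then e else 0)) = (\<Sum>k<n. if k \<in> S then x k * e else 0)"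
    by (rule sum.cong) simp_all
  also have "\<dots> = (\<Sum>k\<in>{..<n} \<inter> S. x k * e)"
    by (rule sum.inter_restrict[symmetric]) simp
  also have "{..<n} \<inter> S = S"
    using assms by blast
  finally show ?thesis
    by (simp add: inner_def sum_distrib_right)
qed

lemma indicator_word_in_half_period_code:
  assumes "S \<subseteq> {..<n}" "degree e < 3" "poly e 1 = 0"
    and "poly e 0 = 0 \<or> (\<forall>k<n. (k + h) mod n \<in> S \<longleftrightarrow> k \<in> S)"
  shows "(\<lambda>k. if k \<in> S then e else 0) \<in> half_period_code n h"
  using assms by (intro half_period_codeI) auto

lemma dual_half_period_code_root_1:
  assumes "CHAR('a::field) = 2" "x \<in> dual_code n (half_period_code n h :: (nat \<Rightarrow> 'a poly) set)" "i < n"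
  shows "poly (x i) 1 = 0"
proof -
  define t :: "'a poly" where "t = [:0, 1:] * [:-1, 1:]"
  have "(\<lambda>k. if k \<in> {i} then t else 0) \<in> half_period_code n h"
    using assms(3) by (intro indicator_word_in_half_period_code) (simp_all add: t_def)
  then have "inner n x (\<lambda>k. if k \<in> {i} then t else 0) = 0"
    using assms(2) unfolding dual_code_def by blast
  then have "vpoly dvd x i * t"
    using assms(3) inner_indicator_word[of "{i}" n x t] by (simp add: mod_0_imp_dvd)
  moreover have "vpoly = [:-1, 1:] * t"
    unfolding t_def vpoly_CHAR_2[OF assms(1)] by (simp only: power2_eq_square mult_ac)
  ultimately have "[:-1, 1:] * t dvd x i * t"
    by (simp only:)
  moreover have "t \<noteq> 0"
    by (simp add: t_def)
  ultimately have "[:-1, 1:] dvd x i"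
    using dvd_mult_cancel_right by blast
  then show ?thesis
    by (simp add: poly_eq_0_iff_dvd)
qed

lemma dual_half_period_code_half_periodic:
  assumes "CHAR('a::field) = 2" "n = 2 * h"
    and "x \<in> dual_code n (half_period_code n h :: (nat \<Rightarrow> 'a poly) set)" "i < n"
  shows "poly (x i) 0 = poly (x ((i + h) mod n)) 0"
proof -
  define j where "j = (i + h) mod n"
  have "j < n" "j \<noteq> i"
    using assms(4) half_shift_neq[OF assms(2,4)] by (simp_all add: j_def)
  have "(\<lambda>k. if k \<in> {i, j} then [:-1, 1:] ^ 2 else 0) \<in> half_period_code n h"
  proof (intro indicator_word_in_half_period_code disjI2 allI impI)
    fix k assume "k < n"
    show "(k + h) mod n \<in> {i, j} \<longleftrightarrow> k \<in> {i, j}"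
      using half_shift_eq_iff[OF assms(2) \<open>k < n\<close>] assms(4) \<open>j < n\<close> half_shift_twice[OF assms(2), of i]
      by (auto simp: j_def)
  qed (use assms(4) \<open>j < n\<close> in \<open>simp_all add: degree_linear_power\<close>)
  then have "inner n x (\<lambda>k. if k \<in> {i, j} then [:-1, 1:] ^ 2 else 0) = 0"
    using assms(3) unfolding dual_code_def by blast
  then have "vpoly dvd (x i + x j) * [:-1, 1:] ^ 2"
    using assms(4) \<open>j < n\<close> \<open>j \<noteq> i\<close> inner_indicator_word[of "{i, j}" n x "[:-1, 1:] ^ 2"]
    by (simp add: dvd_eq_mod_eq_0)
  then have "poly ((x i + x j) * [:-1, 1:] ^ 2) 0 = 0"
    using vpoly_dvd_iff_CHAR_2[OF assms(1)] by blast
  then have "poly (x i) 0 + poly (x j) 0 = 0"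
    by simp
  then show ?thesis
    unfolding j_def using uminus_CHAR_2[OF assms(1)] by (metis add_eq_0_iff)
qed

theorem self_dual_half_period_code:
  assumes "CHAR('a::field) = 2" "n = 2 * h"
  shows "self_dual n (half_period_code n h :: (nat \<Rightarrow> 'a poly) set)"
  unfolding self_dual_def
proof (intro equalityI subsetI)
  fix x :: "nat \<Rightarrow> 'a poly" assume x: "x \<in> half_period_code n h"
  then have "x \<in> words n"
    unfolding half_period_code_def by blast
  with x show "x \<in> dual_code n (half_period_code n h)"
    unfolding dual_code_def using self_orthogonal_half_period_code[OF assms] by blast
next
  fix x :: "nat \<Rightarrow> 'a poly" assume x: "x \<in> dual_code n (half_period_code n h)"
  then have "x \<in> words n"
    unfolding dual_code_def by blast
  with dual_half_period_code_root_1[OF assms(1) x] dual_half_period_code_half_periodic[OF assms x]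
  show "x \<in> half_period_code n h"
    unfolding half_period_code_def by blast
qed

theorem corollary11:
  fixes n :: nat
  assumes "n > 0"
  shows "(\<exists>C :: (nat \<Rightarrow> 'a::{field,finite} poly) set.
            linear_code n C \<and> cyclic_code n C \<and> self_dual n C)
         \<longleftrightarrow> ((\<exists>k::nat. card (UNIV :: 'a set) = 2 ^ k) \<and> even n)"
proof
  assume "\<exists>C :: (nat \<Rightarrow> 'a poly) set. linear_code n C \<and> cyclic_code n C \<and> self_dual n C"
  then obtain C :: "(nat \<Rightarrow> 'a poly) set" where "cyclic_code n C" "self_dual n C"
    by blast
  then have "eval_at_0 ` C = fdual n (eval_at_0 ` C)" "\<forall>x\<in>eval_at_0 ` C. cyc_shift n x \<in> eval_at_0 ` C"
    by (rule self_dual_cyclic_image_eval_at_0)+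
  then have "even (order 1 ([:0, 1:] ^ n - 1 :: 'a poly))"
    by (rule even_order_1_X_pow_minus_1_if_self_dual_cyclic[OF assms])
  then have "CHAR('a) = 2 \<and> even n"
    by (rule even_order_1_X_pow_minus_1D[OF assms prime_CHAR_finite_field])
  then show "(\<exists>k. card (UNIV :: 'a set) = 2 ^ k) \<and> even n"
    using card_power_of_2_if_CHAR_2 by blast
next
  assume "(\<exists>k. card (UNIV :: 'a set) = 2 ^ k) \<and> even n"
  then obtain k h where card: "card (UNIV :: 'a set) = 2 ^ k" and n: "n = 2 * h"
    by (auto elim: evenE)
  from card have "CHAR('a) = 2"
    by (rule CHAR_2_if_card_power_of_2)
  then have "self_dual n (half_period_code n h :: (nat \<Rightarrow> 'a poly) set)"
    using n by (rule self_dual_half_period_code)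
  then show "\<exists>C :: (nat \<Rightarrow> 'a poly) set. linear_code n C \<and> cyclic_code n C \<and> self_dual n C"
    using linear_half_period_code cyclic_half_period_code by blast
qed

end
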